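(* Let $r$ be a positive integer, let $A$ be a cubic graph of order $4r$, let $a$ be a vertex of $A$, and let $A^-=A-a$. If $A^-$ is an induced subgraph of a cubic graph $H$, then any $2$-conversion set of $H$ contains at least $r$ vertices of $A^-$.
   Context: For a graph $H=(V,E)$ and $S_0\subseteq V$, the irreversible $2$-threshold conversion process sets, for $t=1,2,\dots$, $S_t=S_{t-1}\cup\{v: v \text{ has at least } 2 \text{ neighbours in } S_{t-1}\}$; $S_0$ is a $2$-conversion set of $H$ if $S_t=V$ for some $t\ge 0$. *)

theory Defs
  imports Main
begin

definition simple_graph :: "'a set \<Rightarrow> ('a \<Rightarrow> 'a \<Rightarrow> bool) \<Rightarrow> bool" where
  "simple_graph V E \<longleftrightarrow> finite V \<and> (\<forall>u v. E u v \<longrightarrow> u \<in> V \<and> v \<in> V)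
     \<and> (\<forall>u v. E u v \<longrightarrow> E v u) \<and> (\<forall>v. \<not> E v v)"

definition cubic :: "'a set \<Rightarrow> ('a \<Rightarrow> 'a \<Rightarrow> bool) \<Rightarrow> bool" where
  "cubic V E \<longleftrightarrow> simple_graph V E \<and> (\<forall>v\<in>V. card {u \<in> V. E v u} = 3)"

definition conv_step :: "'a set \<Rightarrow> ('a \<Rightarrow> 'a \<Rightarrow> bool) \<Rightarrow> 'a set \<Rightarrow> 'a set" where
  "conv_step V E S = S \<union> {v \<in> V. 2 \<le> card {u \<in> S. E v u}}"

definition conversion_set :: "'a set \<Rightarrow> ('a \<Rightarrow> 'a \<Rightarrow> bool) \<Rightarrow> 'a set \<Rightarrow> bool" where
  "conversion_set V E S0 \<longleftrightarrow> S0 \<subseteq> V \<and> (\<exists>t. (conv_step V E ^^ t) S0 = V)"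

end

theory Submission
  imports Defs "HOL-Library.Product_Lexorder"
begin

text \<open>Order the vertices of \<open>H\<close> injectively, refining the conversion time, so that the seeds
  come first and every other vertex has at least two earlier neighbours. For a vertex set \<open>W\<close>
  let \<open>later v\<close> count the neighbours of \<open>v\<close> in \<open>W\<close> that come after \<open>v\<close>; these numbers sum
  to the number \<open>e(W)\<close> of edges inside \<open>W\<close>. As degrees are at most 3, every non-seed \<open>v\<close> has
  \<open>3 - later v \<ge> 2\<close>; since seeds come first, the last vertex of \<open>W\<close> is a non-seed
  (unless \<open>W \<subseteq> S\<close>) and has \<open>3 - later v = 3\<close>.
  Summing over \<open>W\<close> gives \<open>2 |W - S| + 1 \<le> 3 |W| - e(W)\<close>. The copy \<open>W\<close> of \<open>A - a\<close> has
  \<open>4r - 1\<close> vertices and \<open>6r - 3\<close> edges, hence \<open>|W - S| \<le> 3r - 1\<close> and \<open>|W \<inter> S| \<ge> r\<close>.\<close>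

lemma card_filter_eq_sum_of_bool:
  "finite A \<Longrightarrow> card {x\<in>A. P x} = (\<Sum>x\<in>A. of_bool (P x))"
  by (simp add: Collect_conj_eq Int_commute)

lemma sum_card_earlier_neighbours_eq_later:
  fixes \<rho> :: "'a \<Rightarrow> 'b::linorder"
  assumes "simple_graph V E" and "W \<subseteq> V"
  shows "(\<Sum>v\<in>W. card {w\<in>W. E v w \<and> \<rho> w < \<rho> v}) = (\<Sum>v\<in>W. card {w\<in>W. E v w \<and> \<rho> v < \<rho> w})"
proof -
  have fin: "finite W" and sym: "\<And>u v. E u v \<Longrightarrow> E v u"
    using assms by (auto simp: simple_graph_def finite_subset)
  have "(\<Sum>v\<in>W. card {w\<in>W. E v w \<and> \<rho> w < \<rho> v}) = (\<Sum>v\<in>W. \<Sum>w\<in>W. of_bool (E v w \<and> \<rho> w < \<rho> v))"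
    using fin by (simp add: card_filter_eq_sum_of_bool)
  also have "\<dots> = (\<Sum>w\<in>W. \<Sum>v\<in>W. of_bool (E w v \<and> \<rho> w < \<rho> v))"
    by (subst sum.swap) (use sym in \<open>auto intro!: sum.cong\<close>)
  also have "\<dots> = (\<Sum>w\<in>W. card {v\<in>W. E w v \<and> \<rho> w < \<rho> v})"
    using fin by (simp add: card_filter_eq_sum_of_bool)
  finally show ?thesis .
qed

lemma sum_degree_eq_twice_later_neighbours:
  fixes \<rho> :: "'a \<Rightarrow> 'b::linorder"
  assumes "simple_graph V E" and "W \<subseteq> V" and "inj_on \<rho> W"
  shows "(\<Sum>v\<in>W. card {w\<in>W. E v w}) = 2 * (\<Sum>v\<in>W. card {w\<in>W. E v w \<and> \<rho> v < \<rho> w})"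
proof -
  have fin: "finite W" using assms by (auto simp: simple_graph_def finite_subset)
  have degree_split: "card {w\<in>W. E v w} = card {w\<in>W. E v w \<and> \<rho> w < \<rho> v} + card {w\<in>W. E v w \<and> \<rho> v < \<rho> w}"
    if "v \<in> W" for v
  proof -
    have "\<rho> w \<noteq> \<rho> v" if "w \<in> W" "E v w" for w
      using that \<open>v \<in> W\<close> assms(1,3) by (metis inj_onD simple_graph_def)
    then have "{w\<in>W. E v w} = {w\<in>W. E v w \<and> \<rho> w < \<rho> v} \<union> {w\<in>W. E v w \<and> \<rho> v < \<rho> w}"
      by (auto simp: neq_iff)
    moreover have "card ({w\<in>W. E v w \<and> \<rho> w < \<rho> v} \<union> {w\<in>W. E v w \<and> \<rho> v < \<rho> w})
        = card {w\<in>W. E v w \<and> \<rho> w < \<rho> v} + card {w\<in>W. E v w \<and> \<rho> v < \<rho> w}"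
      using fin by (intro card_Un_disjoint) auto
    ultimately show ?thesis by simp
  qed
  show ?thesis
    using sum_card_earlier_neighbours_eq_later[OF assms(1,2), of \<rho>]
    by (simp add: degree_split sum.distrib)
qed

definition conv_time :: "'a set \<Rightarrow> ('a \<Rightarrow> 'a \<Rightarrow> bool) \<Rightarrow> 'a set \<Rightarrow> 'a \<Rightarrow> nat" where
  "conv_time V E S v = (LEAST n. v \<in> (conv_step V E ^^ n) S)"

lemma conv_time_eq_0: "v \<in> S \<Longrightarrow> conv_time V E S v = 0"
  unfolding conv_time_def by (rule Least_eq_0) simp

lemma two_le_card_earlier_converted_neighbours:
  assumes G: "simple_graph V E" and S: "conversion_set V E S" and v: "v \<in> V" "v \<notin> S"
  shows "2 \<le> card {w\<in>V. E v w \<and> conv_time V E S w < conv_time V E S v}"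
proof -
  define St where "St n = (conv_step V E ^^ n) S" for n
  define \<tau> where "\<tau> = conv_time V E S"
  obtain t where "St t = V" using S by (auto simp: conversion_set_def St_def)
  then have "v \<in> St (\<tau> v)"
    using v unfolding \<tau>_def conv_time_def St_def by (metis LeastI)
  moreover have "\<tau> v \<noteq> 0"
    using \<open>v \<in> St (\<tau> v)\<close> v by (metis St_def funpow_0)
  then obtain m where m: "\<tau> v = Suc m" using not0_implies_Suc by blast
  ultimately have "v \<in> conv_step V E (St m)" by (simp add: St_def)
  moreover have "v \<notin> St m"
  proof
    assume "v \<in> St m"
    then have "\<tau> v \<le> m" unfolding \<tau>_def conv_time_def St_def by (rule Least_le)
    with m show False by simp
  qed
  ultimately have "2 \<le> card {u \<in> St m. E v u}" by (simp add: conv_step_def)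
  also have "\<dots> \<le> card {w\<in>V. E v w \<and> \<tau> w < \<tau> v}"
  proof (rule card_mono)
    show "finite {w\<in>V. E v w \<and> \<tau> w < \<tau> v}" using G by (simp add: simple_graph_def)
    show "{u \<in> St m. E v u} \<subseteq> {w\<in>V. E v w \<and> \<tau> w < \<tau> v}"
    proof safe
      fix u assume u: "u \<in> St m" "E v u"
      then show "u \<in> V" using G by (simp add: simple_graph_def)
      have "\<tau> u \<le> m" using u(1) unfolding \<tau>_def conv_time_def St_def by (rule Least_le)
      then show "\<tau> u < \<tau> v" using m by simp
    qed
  qed
  finally show ?thesis by (simp add: \<tau>_def)
qed

lemma obtain_conversion_order:
  assumes G: "simple_graph V E" and S: "conversion_set V E S"
  obtains \<rho> :: "'a \<Rightarrow> nat \<times> nat"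
  where "inj_on \<rho> V"
    and "\<And>v. v \<in> V - S \<Longrightarrow> 2 \<le> card {w\<in>V. E v w \<and> \<rho> w < \<rho> v}"
    and "\<And>w v. w \<in> S \<Longrightarrow> v \<in> V - S \<Longrightarrow> \<rho> w < \<rho> v"
proof -
  define \<tau> where "\<tau> = conv_time V E S"
  obtain h :: "'a \<Rightarrow> nat" where h: "inj_on h V"
    using G by (meson finite_imp_inj_to_nat_seg simple_graph_def)
  define \<rho> where "\<rho> v = (\<tau> v, h v)" for v
  have mono: "\<rho> w < \<rho> v" if "\<tau> w < \<tau> v" for v w
    using that by (simp add: \<rho>_def less_prod_def)
  have inj: "inj_on \<rho> V" using h by (simp add: \<rho>_def inj_on_def)
  have earlier: "2 \<le> card {w\<in>V. E v w \<and> \<tau> w < \<tau> v}" if "v \<in> V - S" for v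
    using two_le_card_earlier_converted_neighbours[OF G S] that by (simp add: \<tau>_def)
  have earlier_\<rho>: "2 \<le> card {w\<in>V. E v w \<and> \<rho> w < \<rho> v}" if "v \<in> V - S" for v
  proof -
    have "finite {w\<in>V. E v w \<and> \<rho> w < \<rho> v}" using G by (simp add: simple_graph_def)
    then have "card {w\<in>V. E v w \<and> \<tau> w < \<tau> v} \<le> card {w\<in>V. E v w \<and> \<rho> w < \<rho> v}"
      by (rule card_mono) (auto intro: mono)
    with earlier[OF that] show ?thesis by simp
  qed
  have seeds_first: "\<rho> w < \<rho> v" if "w \<in> S" "v \<in> V - S" for w v
  proof -
    have "{w\<in>V. E v w \<and> \<tau> w < \<tau> v} \<noteq> {}"
      using earlier[OF that(2)] by (metis card.empty not_numeral_le_zero)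
    then have "\<tau> w < \<tau> v" using conv_time_eq_0[OF that(1)] by (auto simp: \<tau>_def)
    then show ?thesis by (rule mono)
  qed
  show thesis by (rule that[OF inj earlier_\<rho> seeds_first])
qed

lemma card_later_plus_earlier_neighbours_le_degree:
  fixes \<rho> :: "'a \<Rightarrow> 'b::linorder"
  assumes "simple_graph V E" and "W \<subseteq> V"
  shows "card {w\<in>W. E v w \<and> \<rho> v < \<rho> w} + card {w\<in>V. E v w \<and> \<rho> w < \<rho> v} \<le> card {u\<in>V. E v u}"
proof -
  have finV: "finite V" and finW: "finite W"
    using assms by (auto simp: simple_graph_def finite_subset)
  have "card {w\<in>W. E v w \<and> \<rho> v < \<rho> w} + card {w\<in>V. E v w \<and> \<rho> w < \<rho> v}
      = card ({w\<in>W. E v w \<and> \<rho> v < \<rho> w} \<union> {w\<in>V. E v w \<and> \<rho> w < \<rho> v})"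
    using finV finW by (intro card_Un_disjoint[symmetric]) auto
  also have "\<dots> \<le> card {u\<in>V. E v u}"
    using finV assms(2) by (intro card_mono) auto
  finally show ?thesis .
qed

lemma obtain_last_nonseed:
  fixes \<rho> :: "'a \<Rightarrow> 'b::linorder"
  assumes "finite W" and "\<not> W \<subseteq> S" and seeds_first: "\<And>w v. w \<in> S \<Longrightarrow> v \<in> W - S \<Longrightarrow> \<rho> w < \<rho> v"
  obtains vm where "vm \<in> W - S" and "\<And>w. w \<in> W \<Longrightarrow> \<rho> w \<le> \<rho> vm"
proof -
  have "Max (\<rho> ` (W - S)) \<in> \<rho> ` (W - S)" using assms(1,2) by (intro Max_in) auto
  then obtain vm where vm: "vm \<in> W - S" "\<rho> vm = Max (\<rho> ` (W - S))" by auto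
  have "\<rho> w \<le> \<rho> vm" if "w \<in> W" for w
  proof (cases "w \<in> S")
    case True
    then show ?thesis using seeds_first[OF _ vm(1)] by (simp add: less_imp_le)
  next
    case False
    then show ?thesis using vm(2) assms(1) that by simp
  qed
  with vm(1) show thesis by (rule that)
qed

lemma subcubic_conversion_set_bound:
  assumes G: "simple_graph V E" and deg: "\<forall>v\<in>V. card {u\<in>V. E v u} \<le> 3"
    and S: "conversion_set V E S" and W: "W \<subseteq> V" "\<not> W \<subseteq> S"
  shows "4 * card (W - S) + (\<Sum>v\<in>W. card {w\<in>W. E v w}) < 6 * card W"
proof -
  obtain \<rho> :: "'a \<Rightarrow> nat \<times> nat" where inj: "inj_on \<rho> V"
    and earlier: "\<And>v. v \<in> V - S \<Longrightarrow> 2 \<le> card {w\<in>V. E v w \<and> \<rho> w < \<rho> v}"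
    and seeds_first: "\<And>w v. w \<in> S \<Longrightarrow> v \<in> V - S \<Longrightarrow> \<rho> w < \<rho> v"
    using obtain_conversion_order[OF G S] by blast
  define later where "later v = card {w\<in>W. E v w \<and> \<rho> v < \<rho> w}" for v
  have finW: "finite W" using G W by (auto simp: simple_graph_def finite_subset)
  have later_le: "later v \<le> 3" if "v \<in> W" for v
    using card_later_plus_earlier_neighbours_le_degree[OF G W(1), of v \<rho>] deg W that
    unfolding later_def by force
  have later_nonseed: "later v \<le> 1" if "v \<in> W - S" for v
    using card_later_plus_earlier_neighbours_le_degree[OF G W(1), of v \<rho>] deg W that earlier[of v]
    unfolding later_def by force
  obtain vm where vm: "vm \<in> W - S" and vm_last: "\<And>w. w \<in> W \<Longrightarrow> \<rho> w \<le> \<rho> vm"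
    using obtain_last_nonseed[OF finW W(2)] seeds_first W(1) by blast
  have "later vm = 0"
  proof -
    have "{w\<in>W. E vm w \<and> \<rho> vm < \<rho> w} = {}" using vm_last by (auto simp: not_less[symmetric])
    then show ?thesis unfolding later_def by (simp only: card.empty)
  qed
  have "2 * card (W - S) + 1 = (\<Sum>v\<in>W-S. 2) + (\<Sum>v\<in>W-S. of_bool (v = vm))"
    using vm finW by simp
  also have "\<dots> = (\<Sum>v\<in>W-S. 2 + of_bool (v = vm))"
    by (rule sum.distrib[symmetric])
  also have "\<dots> \<le> (\<Sum>v\<in>W-S. 3 - later v)"
  proof (rule sum_mono)
    fix v assume "v \<in> W - S"
    then show "2 + of_bool (v = vm) \<le> 3 - later v"
      using later_nonseed[of v] \<open>later vm = 0\<close> by (cases "v = vm") auto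
  qed
  also have "\<dots> \<le> (\<Sum>v\<in>W. 3 - later v)"
    using finW by (intro sum_mono2) auto
  finally have "2 * card (W - S) + 1 \<le> (\<Sum>v\<in>W. 3 - later v)" .
  moreover have "(\<Sum>v\<in>W. 3 - later v) + (\<Sum>v\<in>W. later v) = (\<Sum>v\<in>W. 3)"
    unfolding sum.distrib[symmetric] using later_le by (intro sum.cong) auto
  moreover have "(\<Sum>v\<in>W. 3::nat) = 3 * card W" by simp
  moreover have "(\<Sum>v\<in>W. card {w\<in>W. E v w}) = 2 * (\<Sum>v\<in>W. later v)"
    unfolding later_def using G W inj
    by (intro sum_degree_eq_twice_later_neighbours) (auto intro: inj_on_subset)
  ultimately show ?thesis by linarith
qed

lemma sum_degree_Diff_singleton:
  assumes G: "simple_graph V E" and a: "a \<in> V"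
  shows "(\<Sum>u\<in>V-{a}. card {x\<in>V-{a}. E u x}) + 2 * card {x\<in>V. E a x} = (\<Sum>u\<in>V. card {x\<in>V. E u x})"
proof -
  have fin: "finite V" using G by (simp add: simple_graph_def)
  have deg_remove: "card {x\<in>V. E u x} = of_bool (E u a) + card {x\<in>V-{a}. E u x}" for u
    unfolding card_filter_eq_sum_of_bool[OF fin] card_filter_eq_sum_of_bool[OF finite_Diff[OF fin]]
    using fin by (rule sum.remove[OF _ a])
  have "(\<Sum>u\<in>V-{a}. of_bool (E u a)) = card {u\<in>V-{a}. E u a}"
    using fin by (intro card_filter_eq_sum_of_bool[symmetric]) simp
  also have "{u\<in>V-{a}. E u a} = {x\<in>V. E a x}"
    using G by (auto simp: simple_graph_def)
  finally have back_edges: "(\<Sum>u\<in>V-{a}. of_bool (E u a)) = card {x\<in>V. E a x}" .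
  have "(\<Sum>u\<in>V. card {x\<in>V. E u x}) = card {x\<in>V. E a x} + (\<Sum>u\<in>V-{a}. card {x\<in>V. E u x})"
    using fin a by (simp add: sum.remove)
  also have "\<dots> = card {x\<in>V. E a x} + (\<Sum>u\<in>V-{a}. of_bool (E u a)) + (\<Sum>u\<in>V-{a}. card {x\<in>V-{a}. E u x})"
    by (simp only: deg_remove sum.distrib add.assoc)
  finally show ?thesis using back_edges by simp
qed

lemma sum_degree_induced_image:
  assumes inj: "inj_on f U" and induced: "\<forall>u\<in>U. \<forall>v\<in>U. E' (f u) (f v) \<longleftrightarrow> E u v"
  shows "(\<Sum>v\<in>f ` U. card {w\<in>f ` U. E' v w}) = (\<Sum>u\<in>U. card {x\<in>U. E u x})"
proof -
  have "card {w\<in>f ` U. E' (f u) w} = card {x\<in>U. E u x}" if "u \<in> U" for u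
  proof -
    have "{w\<in>f ` U. E' (f u) w} = f ` {x\<in>U. E u x}" using that induced by auto
    moreover have "inj_on f {x\<in>U. E u x}" using inj by (rule inj_on_subset) auto
    ultimately show ?thesis by (simp add: card_image)
  qed
  then show ?thesis by (simp add: sum.reindex inj)
qed

theorem lemma5p15:
  fixes VA :: "'a set" and EA :: "'a \<Rightarrow> 'a \<Rightarrow> bool" and a :: 'a
    and VH :: "'b set" and EH :: "'b \<Rightarrow> 'b \<Rightarrow> bool" and f :: "'a \<Rightarrow> 'b"
    and r :: nat and S :: "'b set"
  assumes "r > 0"
    and "cubic VA EA" and "card VA = 4 * r" and "a \<in> VA"
    and "cubic VH EH"
    and "inj_on f (VA - {a})" and "f ` (VA - {a}) \<subseteq> VH"
    and "\<forall>u \<in> VA - {a}. \<forall>v \<in> VA - {a}. EH (f u) (f v) \<longleftrightarrow> EA u v"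
    and "conversion_set VH EH S"
  shows "r \<le> card (S \<inter> f ` (VA - {a}))"
proof -
  define W where "W = f ` (VA - {a})"
  have A: "simple_graph VA EA" and H: "simple_graph VH EH"
    using assms(2,5) by (simp_all add: cubic_def)
  have card_W: "card W = 4 * r - 1"
    using assms(3,4,6) A by (simp add: W_def card_image simple_graph_def)
  have "(\<Sum>v\<in>W. card {w\<in>W. EH v w}) + 6 = 3 * card VA"
    using sum_degree_Diff_singleton[OF A assms(4)] sum_degree_induced_image[OF assms(6,8)] assms(2,4)
    by (simp add: W_def cubic_def)
  then have degree_sum_W: "(\<Sum>v\<in>W. card {w\<in>W. EH v w}) + 6 = 12 * r"
    using assms(3) by simp
  have split_W: "card W = card (W \<inter> S) + card (W - S)"
    using A by (intro card_Int_Diff) (simp add: W_def simple_graph_def)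
  show ?thesis
  proof (cases "W \<subseteq> S")
    case True
    then show ?thesis using card_W assms(1) by (simp add: W_def Int_absorb1)
  next
    case False
    have "4 * card (W - S) + (\<Sum>v\<in>W. card {w\<in>W. EH v w}) < 6 * card W"
      using subcubic_conversion_set_bound[OF H _ assms(9) _ False] assms(5,7)
      by (simp add: cubic_def W_def)
    then show ?thesis using split_W card_W degree_sum_W assms(1) by (simp add: W_def Int_commute)
  qed
qed

end
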